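(* Let $n \equiv 3 \pmod 4$, $\ell = (n+1)/4$, $A = \{(a,b) \in 2^{[n]}\times 2^{[n]} \mid |a| = |b| = \ell,\ |a\cap b| = 0\}$ and $B = \{(a,b) \in 2^{[n]}\times 2^{[n]} \mid |a| = |b| = \ell,\ |a\cap b| = 1\}$. Let $\mu$ be any probability distribution on pairs $(a,b)$ of subsets of $[n]$ supported on $A\cup B$ and uniform when conditioned on $A$ and when conditioned on $B$. Let $f, g$ be nonnegative functions on $2^{[n]}$ and let $X = f(a)g(b)$ with $(a,b)\sim\mu$. Then for every $0 < \epsilon < 1$, \[ (1-\epsilon)\,\mathbb{E}[X \mid A] - \mathbb{E}[X \mid B] \leqslant \|X\restriction(A\cup B)\|_\infty \, 2^{-\frac{\epsilon^2}{16\ln 2}\ell + O(\log \ell)}, \] where the constant in $O(\log\ell)$ is absolute and $X \restriction (A\cup B)$ denotes the function $(a,b)\mapsto f(a)g(b)$ restricted to $A \cup B$. *)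

theory Defs
  imports "HOL-Probability.Probability"
begin

definition pairs_meet :: "nat \<Rightarrow> nat \<Rightarrow> nat \<Rightarrow> (nat set \<times> nat set) set" where
  "pairs_meet n l k = {(a, b). a \<subseteq> {1..n} \<and> b \<subseteq> {1..n} \<and> card a = l \<and> card b = l
                          \<and> card (a \<inter> b) = k}"

end

theory Submission
  imports Defs "HOL-Analysis.Harmonic_Numbers"
begin

text \<open>
  Let \<open>N = {1..n}\<close>, so \<open>card N = 4 * l - 1\<close>. A split \<open>(i, T)\<close> cuts \<open>N\<close> into \<open>{i}\<close> and two
  halves \<open>T\<close>, \<open>T'\<close> of size \<open>2 * l - 1\<close>. Each disjoint pair \<open>(a, b)\<close> lies inside the two halves of
  the same number of splits, and each pair meeting in one point lies, through that point \<open>i\<close>,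
  inside the halves extended by \<open>i\<close> of the same number of splits. So both conditional
  expectations are averages over splits, of \<open>p * q\<close> and of \<open>p' * q'\<close> respectively, where \<open>p\<close>
  sums \<open>f\<close> over the \<open>l\<close>-subsets of \<open>T\<close> and \<open>p'\<close> over those of \<open>T \<union> {i}\<close> containing \<open>i\<close>
  (and \<open>q\<close>, \<open>q'\<close> likewise for \<open>g\<close> and \<open>T'\<close>).

  With \<open>\<alpha> = 1 - \<epsilon> / 4\<close> and the hinges \<open>u = max 0 (\<alpha> * p - p')\<close>, \<open>v = max 0 (\<alpha> * q - q')\<close> one
  has \<open>(\<alpha> * p - u) * (\<alpha> * q - v) \<le> p' * q'\<close>, so it remains to show that the hinges are small
  on average. Grouping the splits by \<open>D = insert i T\<close>, the hinges of \<open>f\<close> over \<open>i \<in> D\<close> are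
  bounded, via Pinsker's inequality, by the entropy deficit \<open>\<Sum>i. ln 2 - H (\<pi> i)\<close> of the marginals
  of the normalised weights of \<open>f\<close> on the \<open>l\<close>-subsets of \<open>D\<close>, and by subadditivity of entropy
  this deficit is at most \<open>2 * l * ln 2 + ln (max f / \<Sum> f)\<close>. Hence either the hinges are at most
  an \<open>\<epsilon> / 4\<close> fraction of \<open>l * \<Sum> f\<close>, or \<open>\<Sum> f \<le> 4 ^ l * exp (- \<epsilon>\<^sup>2 * l / 16) * max f\<close>.
\<close>

section \<open>Pinsker's inequality and subadditivity of entropy\<close>

text \<open>Natural logarithms throughout, so the maximal value is \<open>ln 2\<close>.\<close>
definition binary_entropy :: "real \<Rightarrow> real" where
  "binary_entropy p = - p * ln p - (1 - p) * ln (1 - p)"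

lemma two_mult_le_ln_one_plus_minus_ln_one_minus:
  fixes y :: real
  assumes "0 \<le> y" "y < 1"
  shows "2 * y \<le> ln (1 + y) - ln (1 - y)"
proof -
  let ?g = "\<lambda>z::real. ln (1 + z) - ln (1 - z) - 2 * z"
  have "?g 0 \<le> ?g y"
  proof (rule deriv_nonneg_imp_mono[where g = ?g and g'="\<lambda>z. 1 / (1 + z) + 1 / (1 - z) - 2"])
    fix z assume "z \<in> {0..y}"
    then have z: "0 \<le> z" "z < 1" using assms by auto
    show "(?g has_real_derivative 1 / (1 + z) + 1 / (1 - z) - 2) (at z)"
      using z by (auto intro!: derivative_eq_intros)
    have "1 / (1 + z) + 1 / (1 - z) - 2 = 2 * z\<^sup>2 / ((1 + z) * (1 - z))"
      using z by (simp add: divide_simps) (simp add: algebra_simps power2_eq_square)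
    then show "0 \<le> 1 / (1 + z) + 1 / (1 - z) - 2" using z by simp
  qed (use assms in auto)
  then show ?thesis by simp
qed

lemma sq_le_one_plus_ln_one_minus_ln:
  fixes x :: real
  assumes "\<bar>x\<bar> \<le> 1"
  shows "x\<^sup>2 \<le> (1 + x) * ln (1 + x) + (1 - x) * ln (1 - x)"
proof -
  have nonneg: "x\<^sup>2 \<le> (1 + x) * ln (1 + x) + (1 - x) * ln (1 - x)" if "0 \<le> x" "x < 1" for x :: real
  proof -
    let ?g = "\<lambda>z::real. (1 + z) * ln (1 + z) + (1 - z) * ln (1 - z) - z\<^sup>2"
    have "?g 0 \<le> ?g x"
    proof (rule deriv_nonneg_imp_mono[where g = ?g and g'="\<lambda>z. ln (1 + z) - ln (1 - z) - 2 * z"])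
      fix z assume "z \<in> {0..x}"
      then have z: "0 \<le> z" "z < 1" using that by auto
      then show "(?g has_real_derivative ln (1 + z) - ln (1 - z) - 2 * z) (at z)"
        by (auto intro!: derivative_eq_intros simp: power2_eq_square)
      show "0 \<le> ln (1 + z) - ln (1 - z) - 2 * z"
        using two_mult_le_ln_one_plus_minus_ln_one_minus[OF z] by simp
    qed (use that in auto)
    then show ?thesis by simp
  qed
  have endpoint: "(1::real)\<^sup>2 \<le> (1 + 1) * ln (1 + 1) + (1 - 1) * ln (1 - 1)"
    using ln2_ge_two_thirds by simp
  show ?thesis
  proof (cases "0 \<le> x")
    case True
    then show ?thesis using nonneg endpoint assms by (cases "x = 1") auto
  next
    case False
    then show ?thesis using nonneg[of "- x"] endpoint assms by (cases "x = -1") (auto simp: add.commute)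
  qed
qed

lemma binary_entropy_pinsker:
  assumes "0 \<le> p" "p \<le> 1"
  shows "2 * (p - 1/2)\<^sup>2 \<le> ln 2 - binary_entropy p"
proof -
  have halve: "t / 2 * ln (t / 2) = t / 2 * ln t - t / 2 * ln 2" if "0 \<le> t" for t :: real
    using that by (cases "t = 0") (auto simp: ln_div algebra_simps)
  define x where "x = 2 * p - 1"
  have p: "p = (1 + x) / 2" "1 - p = (1 - x) / 2" by (auto simp: x_def)
  have "2 * (p - 1/2)\<^sup>2 = x\<^sup>2 / 2" by (simp add: x_def power2_eq_square algebra_simps)
  also have "\<dots> \<le> ((1 + x) * ln (1 + x) + (1 - x) * ln (1 - x)) / 2"
    using sq_le_one_plus_ln_one_minus_ln[of x] assms by (simp add: x_def)
  also have "\<dots> = ln 2 - binary_entropy p"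
  proof -
    have "p * ln p = (1 + x) / 2 * ln (1 + x) - (1 + x) / 2 * ln 2"
      unfolding p(1) by (rule halve) (use assms in \<open>simp add: x_def\<close>)
    moreover have "(1 - p) * ln (1 - p) = (1 - x) / 2 * ln (1 - x) - (1 - x) / 2 * ln 2"
      unfolding p(2) by (rule halve) (use assms in \<open>simp add: x_def\<close>)
    ultimately show ?thesis by (simp add: binary_entropy_def field_simps)
  qed
  finally show ?thesis .
qed

lemma gibbs_inequality:
  fixes \<nu> q :: "'b \<Rightarrow> real"
  assumes "finite K" and "sum \<nu> K = 1" and "sum q K \<le> 1"
    and "\<And>a. a \<in> K \<Longrightarrow> 0 \<le> \<nu> a" and "\<And>a. a \<in> K \<Longrightarrow> 0 \<le> q a"
    and "\<And>a. a \<in> K \<Longrightarrow> 0 < \<nu> a \<Longrightarrow> 0 < q a"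
  shows "(\<Sum>a\<in>K. \<nu> a * ln (q a)) \<le> (\<Sum>a\<in>K. \<nu> a * ln (\<nu> a))"
proof -
  have "\<nu> a * ln (q a) - \<nu> a * ln (\<nu> a) \<le> q a - \<nu> a" if "a \<in> K" for a
  proof (cases "\<nu> a = 0")
    case True
    then show ?thesis using assms(5)[OF that] by simp
  next
    case False
    then have \<nu>: "0 < \<nu> a" using assms(4)[OF that] by simp
    have q: "0 < q a" using assms(6)[OF that \<nu>] .
    have "\<nu> a * ln (q a) - \<nu> a * ln (\<nu> a) = \<nu> a * ln (q a / \<nu> a)"
      using q \<nu> by (simp add: ln_div algebra_simps)
    also have "\<dots> \<le> \<nu> a * (q a / \<nu> a - 1)"
      using q \<nu> by (intro mult_left_mono ln_le_minus_one) auto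
    also have "\<dots> = q a - \<nu> a" using \<nu> by (simp add: field_simps)
    finally show ?thesis .
  qed
  then have "(\<Sum>a\<in>K. \<nu> a * ln (q a) - \<nu> a * ln (\<nu> a)) \<le> (\<Sum>a\<in>K. q a - \<nu> a)"
    by (rule sum_mono)
  then show ?thesis using assms(2,3) by (simp add: sum_subtractf)
qed

lemma sum_Pow_prod_if_mem:
  fixes p :: "'a \<Rightarrow> 'b::comm_ring_1"
  assumes "finite D"
  shows "(\<Sum>a\<in>Pow D. \<Prod>i\<in>D. if i \<in> a then p i else 1 - p i) = 1"
proof -
  have "(\<Prod>i\<in>D. if i \<in> a then p i else 1 - p i) = prod p a * prod (\<lambda>i. 1 - p i) (D - a)"
    if "a \<in> Pow D" for a
  proof -
    have "D \<inter> {i. i \<in> a} = a" "D \<inter> - {i. i \<in> a} = D - a" using that by auto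
    then show ?thesis
      using prod.If_cases[OF assms, where P = "\<lambda>i. i \<in> a" and h = p and g = "\<lambda>i. 1 - p i"] by simp
  qed
  then have "(\<Sum>a\<in>Pow D. \<Prod>i\<in>D. if i \<in> a then p i else 1 - p i) = (\<Prod>i\<in>D. p i + (1 - p i))"
    using prod_add[OF assms, of p "\<lambda>i. 1 - p i"] by simp
  then show ?thesis by simp
qed

lemma sum_compl_filter:
  fixes h :: "'a \<Rightarrow> 'b::ab_group_add"
  assumes "finite K"
  shows "sum h {a\<in>K. \<not> P a} = sum h K - sum h {a\<in>K. P a}"
proof -
  have "{a\<in>K. \<not> P a} = K - {a. P a}" "{a\<in>K. P a} = K \<inter> {a. P a}" by auto
  then show ?thesis using sum.Int_Diff[OF assms, of h "{a. P a}"] by simp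
qed

lemma sum_weighted_sum_if_mem:
  fixes \<nu> :: "'a set \<Rightarrow> real"
  assumes "finite K" and "sum \<nu> K = 1"
  shows "(\<Sum>a\<in>K. \<nu> a * (\<Sum>i\<in>D. if i \<in> a then x i else y i))
       = (\<Sum>i\<in>D. sum \<nu> {a\<in>K. i \<in> a} * x i + (1 - sum \<nu> {a\<in>K. i \<in> a}) * y i)"
proof -
  have split: "(\<Sum>a\<in>K. \<nu> a * (if i \<in> a then x i else y i))
      = sum \<nu> {a\<in>K. i \<in> a} * x i + sum \<nu> {a\<in>K. i \<notin> a} * y i" for i
  proof -
    have "K \<inter> {a. i \<in> a} = {a\<in>K. i \<in> a}" "K \<inter> - {a. i \<in> a} = {a\<in>K. i \<notin> a}" by auto
    then show ?thesis
      using sum.If_cases[OF assms(1), where P = "\<lambda>a. i \<in> a" and h = "\<lambda>a. \<nu> a * x i"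
          and g = "\<lambda>a. \<nu> a * y i"]
      by (simp add: sum_distrib_right if_distrib[where f = "\<lambda>t. \<nu> _ * t"])
  qed
  have compl: "sum \<nu> {a\<in>K. i \<notin> a} = 1 - sum \<nu> {a\<in>K. i \<in> a}" for i
    using sum_compl_filter[OF assms(1), of \<nu> "\<lambda>a. i \<in> a"] assms(2) by simp
  have "(\<Sum>a\<in>K. \<nu> a * (\<Sum>i\<in>D. if i \<in> a then x i else y i))
      = (\<Sum>i\<in>D. \<Sum>a\<in>K. \<nu> a * (if i \<in> a then x i else y i))"
    unfolding sum_distrib_left by (rule sum.swap)
  also have "\<dots> = (\<Sum>i\<in>D. sum \<nu> {a\<in>K. i \<in> a} * x i + (1 - sum \<nu> {a\<in>K. i \<in> a}) * y i)"
    by (simp only: split compl)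
  finally show ?thesis .
qed

lemma marginal_bounds:
  fixes \<nu> :: "'a set \<Rightarrow> real"
  assumes "finite K" and "sum \<nu> K = 1" and "\<And>a. a \<in> K \<Longrightarrow> 0 \<le> \<nu> a"
  shows "a \<in> K \<Longrightarrow> \<nu> a \<le> (if i \<in> a then sum \<nu> {b\<in>K. i \<in> b} else 1 - sum \<nu> {b\<in>K. i \<in> b})"
    and "0 \<le> (if i \<in> a then sum \<nu> {b\<in>K. i \<in> b} else 1 - sum \<nu> {b\<in>K. i \<in> b})"
proof -
  have compl: "1 - sum \<nu> {b\<in>K. i \<in> b} = sum \<nu> {b\<in>K. i \<notin> b}"
    using sum_compl_filter[OF assms(1), of \<nu> "\<lambda>b. i \<in> b"] assms(2) by simp
  show "\<nu> a \<le> (if i \<in> a then sum \<nu> {b\<in>K. i \<in> b} else 1 - sum \<nu> {b\<in>K. i \<in> b})" if "a \<in> K"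
  proof -
    have "\<nu> a \<le> sum \<nu> {b\<in>K. (i \<in> b) = (i \<in> a)}"
      using that assms(1,3) by (intro member_le_sum) auto
    then show ?thesis by (cases "i \<in> a") (simp_all add: compl)
  qed
  have "0 \<le> sum \<nu> {b\<in>K. (i \<in> b) = (i \<in> a)}" using assms(3) by (intro sum_nonneg) auto
  then show "0 \<le> (if i \<in> a then sum \<nu> {b\<in>K. i \<in> b} else 1 - sum \<nu> {b\<in>K. i \<in> b})"
    by (cases "i \<in> a") (simp_all add: compl)
qed

lemma sum_mult_ln_le_ln:
  fixes \<nu> :: "'b \<Rightarrow> real"
  assumes "sum \<nu> K = 1" and "\<And>a. a \<in> K \<Longrightarrow> 0 \<le> \<nu> a" and "\<And>a. a \<in> K \<Longrightarrow> \<nu> a \<le> m"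
  shows "(\<Sum>a\<in>K. \<nu> a * ln (\<nu> a)) \<le> ln m"
proof -
  have "(\<Sum>a\<in>K. \<nu> a * ln (\<nu> a)) \<le> (\<Sum>a\<in>K. \<nu> a * ln m)"
  proof (rule sum_mono)
    fix a assume a: "a \<in> K"
    show "\<nu> a * ln (\<nu> a) \<le> \<nu> a * ln m"
      using assms(2,3)[OF a] by (cases "\<nu> a = 0") (auto intro: mult_left_mono)
  qed
  also have "\<dots> = ln m" using assms(1) by (simp add: sum_distrib_right[symmetric])
  finally show ?thesis .
qed

text \<open>Gibbs' inequality, comparing \<open>\<nu>\<close> with the product distribution having the same marginals.\<close>
lemma neg_ln_le_sum_binary_entropy_marginals:
  fixes \<nu> :: "'a set \<Rightarrow> real"
  assumes "finite D" and "K \<subseteq> Pow D" and "sum \<nu> K = 1"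
    and "\<And>a. a \<in> K \<Longrightarrow> 0 \<le> \<nu> a" and "\<And>a. a \<in> K \<Longrightarrow> \<nu> a \<le> m"
  shows "- ln m \<le> (\<Sum>i\<in>D. binary_entropy (sum \<nu> {a\<in>K. i \<in> a}))"
proof -
  define \<pi> where "\<pi> i = sum \<nu> {a\<in>K. i \<in> a}" for i
  define q where "q a = (\<Prod>i\<in>D. if i \<in> a then \<pi> i else 1 - \<pi> i)" for a
  have finK: "finite K" using assms(1,2) by (simp add: finite_subset)
  have factor_ge: "\<nu> a \<le> (if i \<in> a then \<pi> i else 1 - \<pi> i)" if "a \<in> K" for a i
    unfolding \<pi>_def by (rule marginal_bounds(1)[OF finK assms(3,4) that])
  have factor_nonneg: "0 \<le> (if i \<in> a then \<pi> i else 1 - \<pi> i)" for a i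
    unfolding \<pi>_def by (rule marginal_bounds(2)[OF finK assms(3,4)])
  have factor_pos: "0 < (if i \<in> a then \<pi> i else 1 - \<pi> i)" if "a \<in> K" "0 < \<nu> a" for a i
    using factor_ge[OF that(1), of i] that(2) by linarith
  have "sum q K \<le> sum q (Pow D)"
    using assms(1,2) factor_nonneg by (intro sum_mono2) (auto simp: q_def intro: prod_nonneg)
  also have "\<dots> = 1" unfolding q_def by (rule sum_Pow_prod_if_mem[OF assms(1)])
  finally have "(\<Sum>a\<in>K. \<nu> a * ln (q a)) \<le> (\<Sum>a\<in>K. \<nu> a * ln (\<nu> a))"
    using finK assms(3,4) factor_nonneg factor_pos
    by (intro gibbs_inequality) (auto simp: q_def intro: prod_nonneg prod_pos)
  also have "\<dots> \<le> ln m" using assms(3-5) by (rule sum_mult_ln_le_ln)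
  finally have gibbs: "(\<Sum>a\<in>K. \<nu> a * ln (q a)) \<le> ln m" .
  have "\<nu> a * ln (q a) = \<nu> a * (\<Sum>i\<in>D. if i \<in> a then ln (\<pi> i) else ln (1 - \<pi> i))" if "a \<in> K" for a
  proof (cases "\<nu> a = 0")
    case False
    then have \<nu>: "0 < \<nu> a" using assms(4)[OF that] by simp
    have "ln (q a) = (\<Sum>i\<in>D. ln (if i \<in> a then \<pi> i else 1 - \<pi> i))"
      unfolding q_def by (rule ln_prod[OF assms(1)]) (metis factor_pos[OF that \<nu>] less_irrefl)
    then show ?thesis by (simp add: if_distrib[of ln])
  qed simp
  then have "(\<Sum>a\<in>K. \<nu> a * ln (q a))
      = (\<Sum>a\<in>K. \<nu> a * (\<Sum>i\<in>D. if i \<in> a then ln (\<pi> i) else ln (1 - \<pi> i)))"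
    by (rule sum.cong[OF refl])
  also have "\<dots> = (\<Sum>i\<in>D. \<pi> i * ln (\<pi> i) + (1 - \<pi> i) * ln (1 - \<pi> i))"
    unfolding \<pi>_def by (rule sum_weighted_sum_if_mem[OF finK assms(3)])
  also have "\<dots> = - (\<Sum>i\<in>D. binary_entropy (\<pi> i))"
    unfolding sum_negf[symmetric] binary_entropy_def by (rule sum.cong) auto
  finally show ?thesis using gibbs unfolding \<pi>_def by linarith
qed

section \<open>Subsets of fixed size\<close>

definition subsets_of_card :: "nat \<Rightarrow> 'a set \<Rightarrow> 'a set set" where
  "subsets_of_card k S = {a. a \<subseteq> S \<and> card a = k}"

lemma finite_subsets_of_card: "finite S \<Longrightarrow> finite (subsets_of_card k S)"
  unfolding subsets_of_card_def by (rule finite_subset[of _ "Pow S"]) auto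

lemma card_subsets_of_card: "finite S \<Longrightarrow> card (subsets_of_card k S) = card S choose k"
  unfolding subsets_of_card_def by (rule n_subsets)

lemma card_supersets_of_card:
  assumes "finite X" and "a \<subseteq> X"
  shows "card {T. a \<subseteq> T \<and> T \<subseteq> X \<and> card T = card a + k} = card (X - a) choose k"
proof -
  have fin_a: "finite a" using assms finite_subset by blast
  have "{T. a \<subseteq> T \<and> T \<subseteq> X \<and> card T = card a + k} = (\<lambda>S. a \<union> S) ` subsets_of_card k (X - a)"
  proof (rule set_eqI, rule iffI)
    fix T assume "T \<in> {T. a \<subseteq> T \<and> T \<subseteq> X \<and> card T = card a + k}"
    then have T: "a \<subseteq> T" "T \<subseteq> X" "card T = card a + k" by auto
    then have "card (T - a) = k" using assms(1) fin_a by (simp add: card_Diff_subset finite_subset)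
    moreover have "T = a \<union> (T - a)" using T by auto
    ultimately show "T \<in> (\<lambda>S. a \<union> S) ` subsets_of_card k (X - a)"
      using T unfolding subsets_of_card_def by blast
  next
    fix T assume "T \<in> (\<lambda>S. a \<union> S) ` subsets_of_card k (X - a)"
    then obtain S where S: "S \<subseteq> X - a" "card S = k" "T = a \<union> S"
      by (auto simp: subsets_of_card_def)
    have "finite S" using S(1) assms(1) by (meson finite_Diff finite_subset)
    moreover have "a \<inter> S = {}" using S by auto
    ultimately have "card T = card a + k" using S fin_a by (simp add: card_Un_disjoint)
    then show "T \<in> {T. a \<subseteq> T \<and> T \<subseteq> X \<and> card T = card a + k}" using S assms by auto
  qed
  moreover have "inj_on (\<lambda>S. a \<union> S) (subsets_of_card k (X - a))"
    by (rule inj_onI) (auto simp: subsets_of_card_def)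
  ultimately show ?thesis
    using assms(1) by (simp add: card_image card_subsets_of_card)
qed

lemma sum_double_counting:
  fixes w :: "'b \<Rightarrow> real"
  assumes "finite P" and "finite Q"
    and "\<And>p. p \<in> P \<Longrightarrow> G p = (\<Sum>q\<in>Q. if R p q then w q else 0)"
    and "\<And>q. q \<in> Q \<Longrightarrow> card {p\<in>P. R p q} = c"
  shows "(\<Sum>p\<in>P. G p) = real c * (\<Sum>q\<in>Q. w q)"
proof -
  have "(\<Sum>p\<in>P. G p) = (\<Sum>p\<in>P. \<Sum>q\<in>Q. if R p q then w q else 0)"
    using assms(3) by (rule sum.cong[OF refl])
  also have "\<dots> = (\<Sum>q\<in>Q. \<Sum>p\<in>P. if R p q then w q else 0)"
    by (rule sum.swap)
  also have "\<dots> = (\<Sum>q\<in>Q. w q * real (card {p\<in>P. R p q}))"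
    using assms(1) by (simp add: sum.inter_filter[symmetric] mult.commute)
  also have "\<dots> = real c * (\<Sum>q\<in>Q. w q)"
    using assms(4) by (simp add: sum_distrib_left mult.commute)
  finally show ?thesis .
qed

lemma sum_sum_subsets_avoiding:
  assumes "finite D"
  shows "(\<Sum>i\<in>D. sum h {a\<in>subsets_of_card k D. i \<notin> a}) = real (card D - k) * sum h (subsets_of_card k D)"
proof (rule sum_double_counting[OF assms finite_subsets_of_card[OF assms]])
  fix i
  show "sum h {a\<in>subsets_of_card k D. i \<notin> a} = (\<Sum>a\<in>subsets_of_card k D. if i \<notin> a then h a else 0)"
    using finite_subsets_of_card[OF assms] by (rule sum.inter_filter)
next
  fix a assume "a \<in> subsets_of_card k D"
  then have "a \<subseteq> D" "card a = k" by (auto simp: subsets_of_card_def)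
  moreover have "{i\<in>D. i \<notin> a} = D - a" by auto
  ultimately show "card {i\<in>D. i \<notin> a} = card D - k"
    using assms by (simp add: card_Diff_subset finite_subset)
qed

lemma sum_product_eq_sum_filter:
  fixes f g :: "'a \<Rightarrow> real"
  assumes "finite Q" and "A \<times> B \<subseteq> Q"
  shows "sum f A * sum g B = (\<Sum>q\<in>Q. if q \<in> A \<times> B then (case q of (a, b) \<Rightarrow> f a * g b) else 0)"
proof -
  have "sum f A * sum g B = (\<Sum>(a, b)\<in>A \<times> B. f a * g b)"
    by (simp add: sum_product sum.cartesian_product)
  also have "\<dots> = (\<Sum>(a, b)\<in>Q \<inter> A \<times> B. f a * g b)"
    using assms(2) by (simp add: Int_absorb1)
  also have "\<dots> = (\<Sum>q\<in>Q. if q \<in> A \<times> B then (case q of (a, b) \<Rightarrow> f a * g b) else 0)"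
    using assms(1) by (rule sum.inter_restrict)
  finally show ?thesis .
qed

lemma card_subsets_of_card_through:
  assumes "finite T" and "i \<notin> T" and "0 < k"
  shows "card {a\<in>subsets_of_card k (insert i T). i \<in> a} = card T choose (k - 1)"
proof -
  have "{a\<in>subsets_of_card k (insert i T). i \<in> a}
      = {S. {i} \<subseteq> S \<and> S \<subseteq> insert i T \<and> card S = card {i} + (k - 1)}"
    using assms(3) by (auto simp: subsets_of_card_def)
  then show ?thesis
    using card_supersets_of_card[of "insert i T" "{i}" "k - 1"] assms(1,2) by simp
qed

section \<open>Hinge estimates\<close>

lemma hinge_le_sq_deviation:
  fixes \<epsilon> F u :: real
  assumes "0 < \<epsilon>" "\<epsilon> < 1" "0 < F"
  shows "max 0 ((1 - \<epsilon>/4) * (F - u) - u) \<le> 8 * F / \<epsilon> * (u / F - 1/2)\<^sup>2"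
proof -
  have "\<epsilon> * F * ((1 - \<epsilon>/4) * (F - u) - u) \<le> 2 * (2 * u - F)\<^sup>2"
  proof -
    define d where "d = F - 2 * u"
    have "2 * (2 * u - F)\<^sup>2 - \<epsilon> * F * ((1 - \<epsilon>/4) * (F - u) - u)
        = 2 * (d - \<epsilon> * (2 - \<epsilon>/4) * F / 8)\<^sup>2 + F\<^sup>2 * (\<epsilon>\<^sup>2 / 32) * (4 - (2 - \<epsilon>/4)\<^sup>2)"
      by (simp add: d_def power2_eq_square field_simps)
    moreover have "0 \<le> 4 - (2 - \<epsilon>/4)\<^sup>2" using assms by (simp add: power2_eq_square algebra_simps)
    then have "0 \<le> F\<^sup>2 * (\<epsilon>\<^sup>2 / 32) * (4 - (2 - \<epsilon>/4)\<^sup>2)" by simp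
    moreover have "0 \<le> 2 * (d - \<epsilon> * (2 - \<epsilon>/4) * F / 8)\<^sup>2" by simp
    ultimately show ?thesis by linarith
  qed
  then have "(1 - \<epsilon>/4) * (F - u) - u \<le> 2 * (2 * u - F)\<^sup>2 / (\<epsilon> * F)"
    using assms by (simp add: field_simps)
  moreover have "2 * (2 * u - F)\<^sup>2 / (\<epsilon> * F) = 8 * F / \<epsilon> * (u / F - 1/2)\<^sup>2"
    using assms by (simp add: field_simps power2_eq_square)
  moreover have "0 \<le> 8 * F / \<epsilon> * (u / F - 1/2)\<^sup>2" using assms by simp
  ultimately show ?thesis by linarith
qed

lemma sum_hinge_le_entropy_deficit:
  fixes K :: "'a set set" and h :: "'a set \<Rightarrow> real"
  assumes "finite D" and "K \<subseteq> Pow D"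
    and "\<And>a. a \<in> K \<Longrightarrow> 0 \<le> h a" and "\<And>a. a \<in> K \<Longrightarrow> h a \<le> m"
    and "0 < sum h K" and "0 < \<epsilon>" "\<epsilon> < 1"
  shows "(\<Sum>i\<in>D. max 0 ((1 - \<epsilon>/4) * sum h {a\<in>K. i \<notin> a} - sum h {a\<in>K. i \<in> a}))
     \<le> 4 * sum h K / \<epsilon> * (card D * ln 2 + ln (m / sum h K))"
proof -
  define F where "F = sum h K"
  define \<nu> where "\<nu> a = h a / F" for a
  define \<pi> where "\<pi> i = sum \<nu> {a\<in>K. i \<in> a}" for i
  have finK: "finite K" using assms(1,2) by (simp add: finite_subset)
  have F: "0 < F" using assms(5) by (simp add: F_def)
  have \<nu>_sum: "sum \<nu> K = 1"
    using F unfolding \<nu>_def sum_divide_distrib[symmetric] F_def by simp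
  have \<nu>_bounds: "0 \<le> \<nu> a" "\<nu> a \<le> m / F" if "a \<in> K" for a
    using assms(3,4)[OF that] F by (simp_all add: \<nu>_def divide_right_mono)
  have \<pi>: "sum h {a\<in>K. i \<in> a} = F * \<pi> i" for i
    using F by (simp add: \<pi>_def \<nu>_def sum_divide_distrib[symmetric])
  have compl: "sum h {a\<in>K. i \<notin> a} = F - F * \<pi> i" for i
    using sum_compl_filter[OF finK, of h "\<lambda>a. i \<in> a"] \<pi> by (simp add: F_def)
  have \<pi>_bounds: "0 \<le> \<pi> i" "\<pi> i \<le> 1" for i
    using marginal_bounds(2)[OF finK \<nu>_sum \<nu>_bounds(1), of i "{i}"]
      marginal_bounds(2)[OF finK \<nu>_sum \<nu>_bounds(1), of i "{}"]
    by (simp_all add: \<pi>_def)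
  have "(\<Sum>i\<in>D. max 0 ((1 - \<epsilon>/4) * sum h {a\<in>K. i \<notin> a} - sum h {a\<in>K. i \<in> a}))
      \<le> (\<Sum>i\<in>D. 4 * F / \<epsilon> * (2 * (\<pi> i - 1/2)\<^sup>2))"
  proof (rule sum_mono)
    fix i
    show "max 0 ((1 - \<epsilon>/4) * sum h {a\<in>K. i \<notin> a} - sum h {a\<in>K. i \<in> a})
        \<le> 4 * F / \<epsilon> * (2 * (\<pi> i - 1/2)\<^sup>2)"
      using hinge_le_sq_deviation[OF assms(6,7) F, of "F * \<pi> i"] F by (simp add: \<pi> compl)
  qed
  also have "\<dots> \<le> (\<Sum>i\<in>D. 4 * F / \<epsilon> * (ln 2 - binary_entropy (\<pi> i)))"
    using F assms(6) \<pi>_bounds by (intro sum_mono mult_left_mono binary_entropy_pinsker) auto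
  also have "\<dots> = 4 * F / \<epsilon> * (card D * ln 2 - (\<Sum>i\<in>D. binary_entropy (\<pi> i)))"
    unfolding sum_distrib_left[symmetric] by (simp add: sum_subtractf)
  also have "\<dots> \<le> 4 * F / \<epsilon> * (card D * ln 2 + ln (m / F))"
  proof -
    have "- ln (m / F) \<le> (\<Sum>i\<in>D. binary_entropy (\<pi> i))"
      unfolding \<pi>_def using \<nu>_sum \<nu>_bounds by (intro neg_ln_le_sum_binary_entropy_marginals[OF assms(1,2)])
    then show ?thesis using F assms(6) by (intro mult_left_mono) auto
  qed
  finally show ?thesis by (simp only: F_def)
qed

lemma four_pow_le_choose:
  assumes "0 < l"
  shows "4 ^ l \<le> 4 * real l * real ((2 * l - 1) choose l)"
proof -
  obtain m where m: "l = Suc m" using assms by (cases l) auto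
  have "(2 * l) choose l = ((2 * m + 1) choose m) + ((2 * m + 1) choose (Suc m))" by (simp add: m)
  also have "(2 * m + 1) choose m = (2 * m + 1) choose (Suc m)"
    using binomial_symmetric[of m "2 * m + 1"] by (simp add: Suc_diff_le)
  finally have "(2 * l) choose l = 2 * ((2 * l - 1) choose l)" by (simp add: m)
  then show ?thesis
    using central_binomial_lower_bound[OF assms] assms by (simp add: field_simps)
qed

lemma sum_hinge_le_sum_avoiding:
  fixes h :: "'a set \<Rightarrow> real"
  assumes "finite D" and "\<And>a. a \<in> subsets_of_card k D \<Longrightarrow> 0 \<le> h a" and "0 \<le> \<beta>" and "\<beta> \<le> 1"
  shows "(\<Sum>i\<in>D. max 0 (\<beta> * sum h {a\<in>subsets_of_card k D. i \<notin> a} - sum h {a\<in>subsets_of_card k D. i \<in> a}))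
     \<le> real (card D - k) * sum h (subsets_of_card k D)"
proof -
  have "(\<Sum>i\<in>D. max 0 (\<beta> * sum h {a\<in>subsets_of_card k D. i \<notin> a} - sum h {a\<in>subsets_of_card k D. i \<in> a}))
      \<le> (\<Sum>i\<in>D. sum h {a\<in>subsets_of_card k D. i \<notin> a})"
  proof (rule sum_mono)
    fix i
    have "0 \<le> sum h {a\<in>subsets_of_card k D. i \<notin> a}" "0 \<le> sum h {a\<in>subsets_of_card k D. i \<in> a}"
      using assms(2) by (auto intro: sum_nonneg)
    moreover from this have "\<beta> * sum h {a\<in>subsets_of_card k D. i \<notin> a} \<le> sum h {a\<in>subsets_of_card k D. i \<notin> a}"
      using assms(3,4) by (intro mult_left_le_one_le) auto
    ultimately show "max 0 (\<beta> * sum h {a\<in>subsets_of_card k D. i \<notin> a} - sum h {a\<in>subsets_of_card k D. i \<in> a})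
        \<le> sum h {a\<in>subsets_of_card k D. i \<notin> a}"
      by simp
  qed
  then show ?thesis using sum_sum_subsets_avoiding[OF assms(1)] by simp
qed

lemma sum_hinge_layer_bound:
  fixes h :: "'a set \<Rightarrow> real"
  assumes "finite D" and "card D = 2 * l"
    and "\<And>a. a \<in> subsets_of_card l D \<Longrightarrow> 0 \<le> h a" and "\<And>a. a \<in> subsets_of_card l D \<Longrightarrow> h a \<le> m"
    and "0 < \<epsilon>" and "\<epsilon> < 1"
  shows "(\<Sum>i\<in>D. max 0 ((1 - \<epsilon>/4) * sum h {a\<in>subsets_of_card l D. i \<notin> a}
            - sum h {a\<in>subsets_of_card l D. i \<in> a}))
     \<le> \<epsilon> * real l / 4 * sum h (subsets_of_card l D) + real l * 4 ^ l * m * exp (- \<epsilon>\<^sup>2 * real l / 16)"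
    (is "?hinges \<le> _")
proof -
  define K where "K = subsets_of_card l D"
  define F where "F = sum h K"
  have KD: "K \<subseteq> Pow D" by (auto simp: K_def subsets_of_card_def)
  have F_eq: "sum h (subsets_of_card l D) = F" by (simp add: F_def K_def)
  have F_nonneg: "0 \<le> F" unfolding F_def K_def using assms(3) by (rule sum_nonneg)
  have "K \<noteq> {}"
  proof -
    obtain a where "a \<subseteq> D" "card a = l" using assms(2) obtain_subset_with_card_n[of l D] by auto
    then show ?thesis by (auto simp: K_def subsets_of_card_def)
  qed
  then have m_nonneg: "0 \<le> m" using assms(3,4) K_def by (metis all_not_in_conv order_trans)
  have "?hinges \<le> real (card D - l) * F"
    unfolding F_eq[symmetric] using assms(3,5,6) by (intro sum_hinge_le_sum_avoiding[OF assms(1)]) auto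
  then have trivial: "?hinges \<le> l * F" using assms(2) by simp
  show ?thesis
  proof (cases "F \<le> 4 ^ l * m * exp (- \<epsilon>\<^sup>2 * real l / 16)")
    case True
    then have "l * F \<le> l * (4 ^ l * m * exp (- \<epsilon>\<^sup>2 * real l / 16))" by (intro mult_left_mono) auto
    moreover have "0 \<le> \<epsilon> * real l / 4 * F" using F_nonneg assms(5) by simp
    ultimately show ?thesis using trivial unfolding F_eq by linarith
  next
    case False
    then have F: "0 < F" using m_nonneg
      by (smt (verit) exp_gt_zero mult_nonneg_nonneg zero_le_power)
    have "F \<le> of_nat (card K) * m" unfolding F_def using assms(4) by (rule sum_bounded_above) (simp add: K_def)
    then have "0 < m" using F m_nonneg by (cases "m = 0") auto
    have "ln (4::real) = 2 * ln 2" using ln_realpow[of 2 2] by simp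
    then have "card D * ln 2 + ln (m / F) = ln (4 ^ l * m / F)"
      using F \<open>0 < m\<close> assms(2) by (simp add: ln_div ln_mult ln_realpow)
    also have "\<dots> \<le> ln (exp (\<epsilon>\<^sup>2 * real l / 16))"
      using False F \<open>0 < m\<close> by (subst ln_le_cancel_iff) (auto simp: field_simps exp_minus)
    also have "\<dots> = \<epsilon>\<^sup>2 * real l / 16" by simp
    finally have "4 * F / \<epsilon> * (card D * ln 2 + ln (m / F)) \<le> 4 * F / \<epsilon> * (\<epsilon>\<^sup>2 * real l / 16)"
      using F assms(5) by (intro mult_left_mono) auto
    also have "\<dots> = \<epsilon> * real l / 4 * F" using assms(5) by (simp add: power2_eq_square)
    finally have "?hinges \<le> \<epsilon> * real l / 4 * F"
      using sum_hinge_le_entropy_deficit[OF assms(1) KD, of h m \<epsilon>] assms(3-6) F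
      by (simp add: K_def F_def)
    moreover have "0 \<le> real l * 4 ^ l * m * exp (- \<epsilon>\<^sup>2 * real l / 16)" using m_nonneg by simp
    ultimately show ?thesis unfolding F_eq by linarith
  qed
qed

lemma hinge_product_le:
  fixes p q p' q' \<alpha> :: real
  assumes "0 \<le> p" "0 \<le> q" "0 \<le> p'" "0 \<le> q'" "0 \<le> \<alpha>"
  shows "\<alpha>\<^sup>2 * (p * q) - \<alpha> * (max 0 (\<alpha> * p - p') * q + max 0 (\<alpha> * q - q') * p) \<le> p' * q'"
proof -
  define u where "u = max 0 (\<alpha> * p - p')"
  define v where "v = max 0 (\<alpha> * q - q')"
  have u: "0 \<le> \<alpha> * p - u" "\<alpha> * p - u \<le> p'" "0 \<le> u" using assms by (auto simp: u_def)
  have v: "0 \<le> \<alpha> * q - v" "\<alpha> * q - v \<le> q'" "0 \<le> v" using assms by (auto simp: v_def)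
  have "(\<alpha> * p - u) * (\<alpha> * q - v) \<le> p' * q'" using u v by (intro mult_mono) auto
  moreover have "(\<alpha> * p - u) * (\<alpha> * q - v) = \<alpha>\<^sup>2 * (p * q) - \<alpha> * (u * q + v * p) + u * v"
    by (simp add: power2_eq_square algebra_simps)
  moreover have "0 \<le> u * v" using u v by simp
  ultimately show ?thesis unfolding u_def[symmetric] v_def[symmetric] by linarith
qed

lemma gap_le_of_hinge_bounds:
  fixes S S' U V c \<epsilon> :: real
  assumes "0 < \<epsilon>" "\<epsilon> < 1" "0 \<le> S" "0 \<le> c"
    and "(1 - \<epsilon>/4)\<^sup>2 * S - (1 - \<epsilon>/4) * (U + V) \<le> S'"
    and "U \<le> \<epsilon>/4 * S + c" "V \<le> \<epsilon>/4 * S + c"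
  shows "(1 - \<epsilon>) * S - S' \<le> 2 * c"
proof -
  define \<alpha> where "\<alpha> = 1 - \<epsilon>/4"
  have \<alpha>: "0 \<le> \<alpha>" "\<alpha> \<le> 1" using assms(1,2) by (auto simp: \<alpha>_def)
  have "(1 - \<epsilon>) * S \<le> (\<alpha>\<^sup>2 - \<alpha> * (\<epsilon>/2)) * S"
    using assms(3) by (intro mult_right_mono) (simp_all add: \<alpha>_def power2_eq_square algebra_simps)
  also have "\<dots> \<le> \<alpha>\<^sup>2 * S - \<alpha> * (U + V) + \<alpha> * (2 * c)"
  proof -
    have "\<alpha> * (U + V) \<le> \<alpha> * (\<epsilon>/2 * S + 2 * c)" using assms(6,7) \<alpha> by (intro mult_left_mono) auto
    then show ?thesis by (simp add: algebra_simps)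
  qed
  also have "\<dots> \<le> S' + 2 * c"
  proof -
    have "\<alpha> * (2 * c) \<le> 2 * c" using assms(4) \<alpha> by (intro mult_left_le_one_le) auto
    then show ?thesis using assms(5)[folded \<alpha>_def] by linarith
  qed
  finally show ?thesis by simp
qed

section \<open>Splits of a set of size \<open>4 * l - 1\<close>\<close>

locale splitting =
  fixes N :: "'a set" and l :: nat
  assumes finite_N: "finite N" and card_N: "card N = 4 * l - 1" and l_pos: "0 < l"
begin

definition splits :: "('a \<times> 'a set) set" where
  "splits = {(i, T). i \<in> N \<and> T \<subseteq> N - {i} \<and> card T = 2 * l - 1}"

definition other_half :: "'a \<Rightarrow> 'a set \<Rightarrow> 'a set" where
  "other_half i T = N - {i} - T"

definition meeting_pairs :: "nat \<Rightarrow> ('a set \<times> 'a set) set" where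
  "meeting_pairs k = {(a, b). a \<subseteq> N \<and> b \<subseteq> N \<and> card a = l \<and> card b = l \<and> card (a \<inter> b) = k}"

definition sum_subsets :: "('a set \<Rightarrow> real) \<Rightarrow> 'a set \<Rightarrow> real" where
  "sum_subsets h T = sum h (subsets_of_card l T)"

definition sum_subsets_through :: "('a set \<Rightarrow> real) \<Rightarrow> 'a \<Rightarrow> 'a set \<Rightarrow> real" where
  "sum_subsets_through h i T = sum h {a\<in>subsets_of_card l (insert i T). i \<in> a}"

lemma finite_splits: "finite splits"
proof -
  have "splits \<subseteq> N \<times> Pow N" unfolding splits_def by auto
  then show ?thesis using finite_N finite_subset by blast
qed

lemma finite_meeting_pairs: "finite (meeting_pairs k)"
proof -
  have "meeting_pairs k \<subseteq> Pow N \<times> Pow N" unfolding meeting_pairs_def by auto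
  then show ?thesis using finite_N finite_subset by blast
qed

lemma splitsD:
  assumes "(i, T) \<in> splits"
  shows "i \<in> N" "T \<subseteq> N - {i}" "card T = 2 * l - 1" "finite T"
    "card (other_half i T) = 2 * l - 1" "finite (other_half i T)"
proof -
  show i: "i \<in> N" and T: "T \<subseteq> N - {i}" and "card T = 2 * l - 1"
    using assms by (auto simp: splits_def)
  show "finite T" using T finite_N finite_subset by blast
  then have "card (N - {i} - T) = card (N - {i}) - card T" using T by (intro card_Diff_subset) auto
  then show "card (other_half i T) = 2 * l - 1"
    using i \<open>card T = 2 * l - 1\<close> finite_N card_N l_pos by (simp add: other_half_def)
  show "finite (other_half i T)" using finite_N by (simp add: other_half_def)
qed

lemma sum_subsets_nonneg:
  "(\<And>a. a \<subseteq> N \<Longrightarrow> 0 \<le> h a) \<Longrightarrow> T \<subseteq> N \<Longrightarrow> 0 \<le> sum_subsets h T"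
  unfolding sum_subsets_def by (auto intro!: sum_nonneg simp: subsets_of_card_def)

lemma sum_subsets_through_nonneg:
  "(\<And>a. a \<subseteq> N \<Longrightarrow> 0 \<le> h a) \<Longrightarrow> insert i T \<subseteq> N \<Longrightarrow> 0 \<le> sum_subsets_through h i T"
  unfolding sum_subsets_through_def by (auto intro!: sum_nonneg simp: subsets_of_card_def)

lemma splits_subset:
  assumes "(i, T) \<in> splits"
  shows "insert i T \<subseteq> N" and "insert i (other_half i T) \<subseteq> N"
  using assms by (auto simp: splits_def other_half_def)

lemma other_half_in_splits:
  assumes "(i, T) \<in> splits"
  shows "(i, other_half i T) \<in> splits"
proof -
  have "other_half i T \<subseteq> N - {i}" by (auto simp: other_half_def)
  then show ?thesis using splitsD[OF assms] by (simp add: splits_def)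
qed

lemma other_half_other_half: "(i, T) \<in> splits \<Longrightarrow> other_half i (other_half i T) = T"
  by (auto simp: splits_def other_half_def)

lemma sum_splits_swap_halves:
  "(\<Sum>(i, T)\<in>splits. G i T) = (\<Sum>(i, T)\<in>splits. G i (other_half i T))"
  by (rule sum.reindex_bij_witness[where i = "\<lambda>(i, T). (i, other_half i T)"
        and j = "\<lambda>(i, T). (i, other_half i T)"])
     (auto simp: other_half_in_splits other_half_other_half)

lemma card_splits_containing_disjoint_pair:
  assumes "(a, b) \<in> meeting_pairs 0"
  shows "card {(i, T)\<in>splits. (a, b) \<in> subsets_of_card l T \<times> subsets_of_card l (other_half i T)}
    = (2 * l - 1) * ((2 * l - 2) choose (l - 1))"
proof -
  have ab: "a \<subseteq> N" "b \<subseteq> N" "card a = l" "card b = l" "finite a" "finite b"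
    using assms finite_N finite_subset by (auto simp: meeting_pairs_def)
  then have disj: "a \<inter> b = {}" using assms by (auto simp: meeting_pairs_def)
  then have card_ab: "card (a \<union> b) = 2 * l" using ab by (simp add: card_Un_disjoint)
  let ?S = "\<lambda>i. {T. a \<subseteq> T \<and> T \<subseteq> N - {i} - b \<and> card T = card a + (l - 1)}"
  have eq: "{(i, T)\<in>splits. (a, b) \<in> subsets_of_card l T \<times> subsets_of_card l (other_half i T)}
      = Sigma (N - (a \<union> b)) ?S"
    using ab l_pos by (auto simp: splits_def other_half_def subsets_of_card_def)
  have card_S: "card (?S i) = (2 * l - 2) choose (l - 1)" if i: "i \<in> N - (a \<union> b)" for i
  proof -
    have "N - {i} - b - a = N - insert i (a \<union> b)" by auto
    moreover have "card (N - insert i (a \<union> b)) = card N - card (insert i (a \<union> b))"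
      using finite_N ab i by (intro card_Diff_subset) (auto intro: finite_subset)
    ultimately have "card (N - {i} - b - a) = 2 * l - 2" using i card_ab ab card_N by simp
    then show ?thesis using card_supersets_of_card[of "N - {i} - b" a "l - 1"] finite_N ab i disj by auto
  qed
  have "card (N - (a \<union> b)) = 2 * l - 1"
    using card_N card_ab finite_N ab by (simp add: card_Diff_subset)
  moreover have "finite (?S i)" for i
    by (rule finite_subset[of _ "Pow N"]) (use finite_N in auto)
  ultimately show ?thesis
    unfolding eq using finite_N card_S by (subst card_SigmaI) auto
qed

lemma card_splits_containing_meeting_pair:
  assumes "(a, b) \<in> meeting_pairs 1"
  shows "card {(i, T)\<in>splits. (a, b) \<in> {a\<in>subsets_of_card l (insert i T). i \<in> a}
      \<times> {b\<in>subsets_of_card l (insert i (other_half i T)). i \<in> b}} = (2 * l) choose l"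
proof -
  have ab: "a \<subseteq> N" "b \<subseteq> N" "card a = l" "card b = l" "card (a \<inter> b) = 1" "finite a" "finite b"
    using assms finite_N finite_subset by (auto simp: meeting_pairs_def)
  obtain j where j: "a \<inter> b = {j}" using ab(5) card_1_singletonE by blast
  have card_ab: "card (a \<union> b) = 2 * l - 1" using card_Un_Int[of a b] ab by simp
  have "j \<in> a" "j \<in> b" using j by auto
  have card_a_j: "card (a - {j}) = l - 1" using ab \<open>j \<in> a\<close> by (simp add: card_Diff_singleton)
  have eq: "{(i, T)\<in>splits. (a, b) \<in> {a\<in>subsets_of_card l (insert i T). i \<in> a}
      \<times> {b\<in>subsets_of_card l (insert i (other_half i T)). i \<in> b}}
      = {j} \<times> {T. a - {j} \<subseteq> T \<and> T \<subseteq> N - b \<and> card T = card (a - {j}) + l}"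
    using j ab card_a_j l_pos by (auto simp: splits_def other_half_def subsets_of_card_def)
  have "N - b - (a - {j}) = N - (a \<union> b)" using j by auto
  moreover have "card (N - (a \<union> b)) = card N - card (a \<union> b)"
    using finite_N ab by (intro card_Diff_subset) (auto intro: finite_subset)
  ultimately have "card (N - b - (a - {j})) = 2 * l" using card_N card_ab l_pos by simp
  then show ?thesis
    unfolding eq using card_supersets_of_card[of "N - b" "a - {j}" l] finite_N ab j by auto
qed

lemma sum_splits_product_sums:
  fixes f g :: "'a set \<Rightarrow> real"
  assumes "\<And>i T. (i, T) \<in> splits \<Longrightarrow> X i T \<times> Y i T \<subseteq> meeting_pairs k"
    and "\<And>a b. (a, b) \<in> meeting_pairs k \<Longrightarrow> card {(i, T)\<in>splits. (a, b) \<in> X i T \<times> Y i T} = c"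
  shows "(\<Sum>(i, T)\<in>splits. sum f (X i T) * sum g (Y i T)) = real c * (\<Sum>(a, b)\<in>meeting_pairs k. f a * g b)"
proof (rule sum_double_counting[OF finite_splits finite_meeting_pairs, where R = "\<lambda>(i, T) q. q \<in> X i T \<times> Y i T"])
  fix p assume "p \<in> splits"
  moreover obtain i T where "p = (i, T)" by (cases p)
  ultimately show "(case p of (i, T) \<Rightarrow> sum f (X i T) * sum g (Y i T))
      = (\<Sum>q\<in>meeting_pairs k. if (case p of (i, T) \<Rightarrow> \<lambda>q. q \<in> X i T \<times> Y i T) q
          then (case q of (a, b) \<Rightarrow> f a * g b) else 0)"
    using assms(1)[of i T] sum_product_eq_sum_filter[OF finite_meeting_pairs, where A = "X i T" and B = "Y i T" and f = f and g = g]
    by simp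
next
  fix q assume "q \<in> meeting_pairs k"
  then show "card {p\<in>splits. (case p of (i, T) \<Rightarrow> \<lambda>q. q \<in> X i T \<times> Y i T) q} = c"
    using assms(2) by (cases q) (simp add: case_prod_unfold)
qed

lemma sum_splits_products_disjoint:
  "(\<Sum>(i, T)\<in>splits. sum_subsets f T * sum_subsets g (other_half i T))
    = real ((2 * l - 1) * ((2 * l - 2) choose (l - 1))) * (\<Sum>(a, b)\<in>meeting_pairs 0. f a * g b)"
  unfolding sum_subsets_def
proof (rule sum_splits_product_sums)
  fix i T assume "(i, T) \<in> splits"
  then show "subsets_of_card l T \<times> subsets_of_card l (other_half i T) \<subseteq> meeting_pairs 0"
    using splitsD[of i T]
    by (auto simp: subsets_of_card_def meeting_pairs_def other_half_def disjoint_iff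
        intro!: card_eq_0_iff[THEN iffD2])
qed (rule card_splits_containing_disjoint_pair)

lemma sum_splits_products_meeting:
  "(\<Sum>(i, T)\<in>splits. sum_subsets_through f i T * sum_subsets_through g i (other_half i T))
    = real ((2 * l) choose l) * (\<Sum>(a, b)\<in>meeting_pairs 1. f a * g b)"
  unfolding sum_subsets_through_def
proof (rule sum_splits_product_sums)
  fix i T assume iT: "(i, T) \<in> splits"
  show "{a\<in>subsets_of_card l (insert i T). i \<in> a} \<times> {b\<in>subsets_of_card l (insert i (other_half i T)). i \<in> b}
      \<subseteq> meeting_pairs 1"
  proof (rule subsetI)
    fix q assume "q \<in> {a\<in>subsets_of_card l (insert i T). i \<in> a}
        \<times> {b\<in>subsets_of_card l (insert i (other_half i T)). i \<in> b}"
    then obtain a b where q: "q = (a, b)" "a \<subseteq> insert i T" "b \<subseteq> insert i (N - {i} - T)"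
        "card a = l" "card b = l" "i \<in> a" "i \<in> b"
      by (auto simp: subsets_of_card_def other_half_def)
    then have "a \<inter> b = {i}" by auto
    then show "q \<in> meeting_pairs 1" using q splitsD[OF iT] by (auto simp: meeting_pairs_def)
  qed
qed (rule card_splits_containing_meeting_pair)

lemma card_subsets_of_card_halves:
  assumes "(i, T) \<in> splits"
  shows "card (subsets_of_card l T) = (2 * l - 1) choose l"
    and "card (subsets_of_card l (other_half i T)) = (2 * l - 1) choose l"
    and "card {a\<in>subsets_of_card l (insert i T). i \<in> a} = (2 * l - 1) choose l"
    and "card {a\<in>subsets_of_card l (insert i (other_half i T)). i \<in> a} = (2 * l - 1) choose l"
proof -
  have sym: "(2 * l - 1) choose (l - 1) = (2 * l - 1) choose l"
    using binomial_symmetric[of "l - 1" "2 * l - 1"] l_pos by (simp add: diff_diff_left)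
  note T = splitsD[OF assms]
  have "i \<notin> T" using T(2) by auto
  show "card (subsets_of_card l T) = (2 * l - 1) choose l"
    "card (subsets_of_card l (other_half i T)) = (2 * l - 1) choose l"
    using T by (simp_all add: card_subsets_of_card)
  show "card {a\<in>subsets_of_card l (insert i T). i \<in> a} = (2 * l - 1) choose l"
    "card {a\<in>subsets_of_card l (insert i (other_half i T)). i \<in> a} = (2 * l - 1) choose l"
    using T \<open>i \<notin> T\<close> l_pos sym by (simp_all add: card_subsets_of_card_through other_half_def)
qed

lemma sum_splits_regroup:
  "(\<Sum>(i, T)\<in>splits. G i T) = (\<Sum>D\<in>subsets_of_card (2 * l) N. \<Sum>i\<in>D. G i (D - {i}))"
proof -
  have "(\<Sum>D\<in>subsets_of_card (2 * l) N. \<Sum>i\<in>D. G i (D - {i}))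
      = (\<Sum>(D, i)\<in>Sigma (subsets_of_card (2 * l) N) (\<lambda>D. D). G i (D - {i}))"
    using finite_subsets_of_card[OF finite_N] finite_N
    by (subst sum.Sigma) (auto simp: subsets_of_card_def intro: finite_subset)
  also have "\<dots> = (\<Sum>(i, T)\<in>splits. G i T)"
  proof (rule sum.reindex_bij_witness[where i = "\<lambda>(i, T). (insert i T, i)" and j = "\<lambda>(D, i). (i, D - {i})"])
    fix x assume "x \<in> Sigma (subsets_of_card (2 * l) N) (\<lambda>D. D)"
    then obtain D i where x: "x = (D, i)" "D \<subseteq> N" "card D = 2 * l" "i \<in> D"
      by (auto simp: subsets_of_card_def)
    then have "finite D" using finite_N finite_subset by blast
    then show "(case (case x of (D, i) \<Rightarrow> (i, D - {i})) of (i, T) \<Rightarrow> (insert i T, i)) = x"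
      "(case x of (D, i) \<Rightarrow> (i, D - {i})) \<in> splits"
      "(case (case x of (D, i) \<Rightarrow> (i, D - {i})) of (i, T) \<Rightarrow> G i T) = (case x of (D, i) \<Rightarrow> G i (D - {i}))"
      using x by (auto simp: splits_def)
  next
    fix p assume "p \<in> splits"
    then obtain i T where p: "p = (i, T)" "(i, T) \<in> splits" by (cases p) auto
    note T = splitsD[OF p(2)]
    then have "i \<notin> T" by auto
    then have "card (insert i T) = 2 * l" using T l_pos by simp
    then show "(case (case p of (i, T) \<Rightarrow> (insert i T, i)) of (D, i) \<Rightarrow> (i, D - {i})) = p"
      "(case p of (i, T) \<Rightarrow> (insert i T, i)) \<in> Sigma (subsets_of_card (2 * l) N) (\<lambda>D. D)"
      using p(1) T by (auto simp: subsets_of_card_def)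
  qed
  finally show ?thesis by simp
qed

lemma card_splits: "card splits = 2 * l * card (subsets_of_card (2 * l) N)"
proof -
  have "real (card splits) = (\<Sum>(i, T)\<in>splits. 1)" by simp
  also have "\<dots> = (\<Sum>D\<in>subsets_of_card (2 * l) N. \<Sum>i\<in>D. (1::real))" by (rule sum_splits_regroup)
  also have "\<dots> = (\<Sum>D\<in>subsets_of_card (2 * l) N. real (2 * l))"
    by (rule sum.cong) (auto simp: subsets_of_card_def)
  finally show ?thesis by (simp only: of_nat_eq_iff flip: of_nat_sum) simp
qed

lemma card_splits_pos: "0 < card splits"
proof -
  have "2 * l \<le> card N" using card_N l_pos by simp
  then obtain D where "D \<subseteq> N" "card D = 2 * l" by (rule obtain_subset_with_card_n)
  then have "subsets_of_card (2 * l) N \<noteq> {}" by (auto simp: subsets_of_card_def)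
  then show ?thesis
    using finite_subsets_of_card[OF finite_N] l_pos by (simp add: card_splits card_gt_0_iff)
qed

lemma layer_split_sums:
  assumes "D \<in> subsets_of_card (2 * l) N" and "i \<in> D"
  shows "sum_subsets h (D - {i}) = sum h {a\<in>subsets_of_card l D. i \<notin> a}"
    and "sum_subsets_through h i (D - {i}) = sum h {a\<in>subsets_of_card l D. i \<in> a}"
    and "other_half i (D - {i}) = N - D"
proof -
  have "subsets_of_card l (D - {i}) = {a\<in>subsets_of_card l D. i \<notin> a}" "insert i (D - {i}) = D"
    using assms(2) by (auto simp: subsets_of_card_def)
  then show "sum_subsets h (D - {i}) = sum h {a\<in>subsets_of_card l D. i \<notin> a}"
    "sum_subsets_through h i (D - {i}) = sum h {a\<in>subsets_of_card l D. i \<in> a}"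
    by (simp_all add: sum_subsets_def sum_subsets_through_def)
  show "other_half i (D - {i}) = N - D"
    using assms by (auto simp: other_half_def subsets_of_card_def)
qed

lemma mult_sum_subsets_complement_le:
  assumes "D \<in> subsets_of_card (2 * l) N" and "a \<in> subsets_of_card l D"
    and "\<And>a b. (a, b) \<in> meeting_pairs 0 \<Longrightarrow> f a * g b \<le> M"
  shows "f a * sum_subsets g (N - D) \<le> real ((2 * l - 1) choose l) * M"
proof -
  have D: "D \<subseteq> N" "card D = 2 * l" "finite D"
    using assms(1) finite_N finite_subset by (auto simp: subsets_of_card_def)
  have "f a * sum_subsets g (N - D) = (\<Sum>b\<in>subsets_of_card l (N - D). f a * g b)"
    by (simp add: sum_subsets_def sum_distrib_left)
  also have "\<dots> \<le> (\<Sum>b\<in>subsets_of_card l (N - D). M)"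
  proof (rule sum_mono)
    fix b assume b: "b \<in> subsets_of_card l (N - D)"
    then have "a \<inter> b = {}" using assms(2) by (auto simp: subsets_of_card_def)
    then have "(a, b) \<in> meeting_pairs 0"
      using assms(2) b D by (auto simp: subsets_of_card_def meeting_pairs_def)
    then show "f a * g b \<le> M" by (rule assms(3))
  qed
  also have "\<dots> = real ((2 * l - 1) choose l) * M"
    using D finite_N card_N by (simp add: card_subsets_of_card card_Diff_subset)
  finally show ?thesis .
qed

lemma layer_hinge_bound:
  fixes f g :: "'a set \<Rightarrow> real"
  assumes D: "D \<in> subsets_of_card (2 * l) N"
    and f_nonneg: "\<And>a. a \<subseteq> N \<Longrightarrow> 0 \<le> f a" and g_nonneg: "\<And>b. b \<subseteq> N \<Longrightarrow> 0 \<le> g b"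
    and bound: "\<And>a b. (a, b) \<in> meeting_pairs 0 \<Longrightarrow> f a * g b \<le> M"
    and eps: "0 < \<epsilon>" "\<epsilon> < 1"
  shows "(\<Sum>i\<in>D. max 0 ((1 - \<epsilon>/4) * sum f {a\<in>subsets_of_card l D. i \<notin> a}
            - sum f {a\<in>subsets_of_card l D. i \<in> a})) * sum_subsets g (N - D)
    \<le> \<epsilon>/4 * (real l * sum f (subsets_of_card l D) * sum_subsets g (N - D))
      + real l * 4 ^ l * real ((2 * l - 1) choose l) * M * exp (- \<epsilon>\<^sup>2 * real l / 16)"
proof -
  define K where "K = subsets_of_card l D"
  define Q where "Q = sum_subsets g (N - D)"
  define E where "E = exp (- \<epsilon>\<^sup>2 * real l / 16)"
  have DN: "D \<subseteq> N" "card D = 2 * l" "finite D"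
    using D finite_N finite_subset by (auto simp: subsets_of_card_def)
  have K: "finite K" "K \<noteq> {}"
  proof -
    show "finite K" unfolding K_def using DN(3) by (rule finite_subsets_of_card)
    obtain a where "a \<subseteq> D" "card a = l" using DN(2) obtain_subset_with_card_n[of l D] by auto
    then show "K \<noteq> {}" by (auto simp: K_def subsets_of_card_def)
  qed
  define m where "m = Max (f ` K)"
  have "m \<in> f ` K" unfolding m_def using K by (intro Max_in) auto
  then obtain a0 where a0: "a0 \<in> K" "f a0 = m" by auto
  have f_le_m: "f a \<le> m" if "a \<in> K" for a using K that by (simp add: m_def)
  have Q_nonneg: "0 \<le> Q"
    unfolding Q_def sum_subsets_def using g_nonneg by (intro sum_nonneg) (auto simp: subsets_of_card_def)
  have "(\<Sum>i\<in>D. max 0 ((1 - \<epsilon>/4) * sum f {a\<in>K. i \<notin> a} - sum f {a\<in>K. i \<in> a}))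
      \<le> \<epsilon> * real l / 4 * sum f K + real l * 4 ^ l * m * E"
    unfolding K_def E_def
    by (rule sum_hinge_layer_bound[OF DN(3,2) _ _ eps])
       (use DN(1) f_nonneg f_le_m in \<open>auto simp: K_def subsets_of_card_def\<close>)
  then have "(\<Sum>i\<in>D. max 0 ((1 - \<epsilon>/4) * sum f {a\<in>K. i \<notin> a} - sum f {a\<in>K. i \<in> a})) * Q
      \<le> (\<epsilon> * real l / 4 * sum f K + real l * 4 ^ l * m * E) * Q"
    using Q_nonneg by (rule mult_right_mono)
  also have "\<dots> = \<epsilon>/4 * (real l * sum f K * Q) + real l * 4 ^ l * E * (f a0 * Q)"
    using a0 by (simp add: algebra_simps)
  also have "\<dots> \<le> \<epsilon>/4 * (real l * sum f K * Q) + real l * 4 ^ l * E * (real ((2 * l - 1) choose l) * M)"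
    using mult_sum_subsets_complement_le[OF D _ bound, of a0] a0(1)
    by (intro add_left_mono mult_left_mono) (auto simp: K_def Q_def E_def)
  finally show ?thesis by (simp add: K_def Q_def E_def algebra_simps)
qed

lemma sum_splits_products_by_layer:
  "(\<Sum>(i, T)\<in>splits. sum_subsets f T * sum_subsets g (other_half i T))
    = (\<Sum>D\<in>subsets_of_card (2 * l) N. real l * sum f (subsets_of_card l D) * sum_subsets g (N - D))"
proof -
  have "real l * sum f (subsets_of_card l D) = (\<Sum>i\<in>D. sum f {a\<in>subsets_of_card l D. i \<notin> a})"
    if "D \<in> subsets_of_card (2 * l) N" for D
    using that sum_sum_subsets_avoiding[where D = D and h = f and k = l] finite_N
    by (auto simp: subsets_of_card_def finite_subset)
  then show ?thesis
    unfolding sum_splits_regroup sum_distrib_right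
    by (intro sum.cong refl) (simp add: layer_split_sums sum_distrib_right)
qed

lemma card_layers_le:
  "real (card (subsets_of_card (2 * l) N)) * (real l * 4 ^ l * real ((2 * l - 1) choose l))
    \<le> 2 * real l * (real (card splits) * real ((2 * l - 1) choose l) ^ 2)"
proof -
  have "4 ^ l * real ((2 * l - 1) choose l) \<le> 4 * real l * real ((2 * l - 1) choose l) ^ 2"
    using mult_right_mono[OF four_pow_le_choose[OF l_pos], of "real ((2 * l - 1) choose l)"]
    by (simp add: power2_eq_square algebra_simps)
  then have "real (card (subsets_of_card (2 * l) N)) * (real l * (4 ^ l * real ((2 * l - 1) choose l)))
      \<le> real (card (subsets_of_card (2 * l) N)) * (real l * (4 * real l * real ((2 * l - 1) choose l) ^ 2))"
    by (intro mult_left_mono) auto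
  then show ?thesis by (simp add: card_splits algebra_simps)
qed

lemma sum_splits_hinge_bound:
  fixes f g :: "'a set \<Rightarrow> real"
  assumes "\<And>a. a \<subseteq> N \<Longrightarrow> 0 \<le> f a" and "\<And>b. b \<subseteq> N \<Longrightarrow> 0 \<le> g b"
    and "\<And>a b. (a, b) \<in> meeting_pairs 0 \<Longrightarrow> f a * g b \<le> M" and "0 \<le> M"
    and "0 < \<epsilon>" "\<epsilon> < 1"
  shows "(\<Sum>(i, T)\<in>splits. max 0 ((1 - \<epsilon>/4) * sum_subsets f T - sum_subsets_through f i T)
            * sum_subsets g (other_half i T))
    \<le> \<epsilon>/4 * (\<Sum>(i, T)\<in>splits. sum_subsets f T * sum_subsets g (other_half i T))
      + 2 * real l * (real (card splits) * real ((2 * l - 1) choose l) ^ 2) * M * exp (- \<epsilon>\<^sup>2 * real l / 16)"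
proof -
  define Lay where "Lay = subsets_of_card (2 * l) N"
  define E where "E = exp (- \<epsilon>\<^sup>2 * real l / 16)"
  define c where "c = real l * 4 ^ l * real ((2 * l - 1) choose l)"
  define hinges where "hinges D = (\<Sum>i\<in>D. max 0 ((1 - \<epsilon>/4) * sum f {a\<in>subsets_of_card l D. i \<notin> a}
      - sum f {a\<in>subsets_of_card l D. i \<in> a}))" for D
  have "(\<Sum>(i, T)\<in>splits. max 0 ((1 - \<epsilon>/4) * sum_subsets f T - sum_subsets_through f i T)
        * sum_subsets g (other_half i T)) = (\<Sum>D\<in>Lay. hinges D * sum_subsets g (N - D))"
    unfolding sum_splits_regroup Lay_def hinges_def sum_distrib_right
    by (intro sum.cong refl) (simp add: layer_split_sums)
  also have "\<dots> \<le> (\<Sum>D\<in>Lay. \<epsilon>/4 * (real l * sum f (subsets_of_card l D) * sum_subsets g (N - D)) + c * M * E)"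
    unfolding hinges_def c_def Lay_def E_def
    by (intro sum_mono layer_hinge_bound) (use assms in auto)
  also have "\<dots> = \<epsilon>/4 * (\<Sum>(i, T)\<in>splits. sum_subsets f T * sum_subsets g (other_half i T))
      + real (card Lay) * c * M * E"
    by (simp add: sum.distrib sum_distrib_left sum_splits_products_by_layer Lay_def)
  also have "real (card Lay) * c * M * E
      \<le> 2 * real l * (real (card splits) * real ((2 * l - 1) choose l) ^ 2) * M * E"
    using card_layers_le \<open>0 \<le> M\<close> by (intro mult_right_mono) (auto simp: Lay_def c_def E_def)
  finally show ?thesis by (simp add: E_def)
qed
lemma sum_splits_ones:
  "(\<Sum>(i, T)\<in>splits. sum_subsets (\<lambda>_. 1) T * sum_subsets (\<lambda>_. 1) (other_half i T))
     = real (card splits) * real ((2 * l - 1) choose l) ^ 2"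
  "(\<Sum>(i, T)\<in>splits. sum_subsets_through (\<lambda>_. 1) i T * sum_subsets_through (\<lambda>_. 1) i (other_half i T))
     = real (card splits) * real ((2 * l - 1) choose l) ^ 2"
proof -
  have "(\<Sum>(i, T)\<in>splits. sum_subsets (\<lambda>_. 1) T * sum_subsets (\<lambda>_. 1) (other_half i T))
      = (\<Sum>p\<in>splits. real ((2 * l - 1) choose l) ^ 2)"
    by (rule sum.cong[OF refl], clarify)
       (simp add: sum_subsets_def card_subsets_of_card_halves power2_eq_square)
  moreover have "(\<Sum>(i, T)\<in>splits. sum_subsets_through (\<lambda>_. 1) i T
        * sum_subsets_through (\<lambda>_. 1) i (other_half i T))
      = (\<Sum>p\<in>splits. real ((2 * l - 1) choose l) ^ 2)"
    by (rule sum.cong[OF refl], clarify)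
       (simp add: sum_subsets_through_def card_subsets_of_card_halves power2_eq_square)
  ultimately show
    "(\<Sum>(i, T)\<in>splits. sum_subsets (\<lambda>_. 1) T * sum_subsets (\<lambda>_. 1) (other_half i T))
       = real (card splits) * real ((2 * l - 1) choose l) ^ 2"
    "(\<Sum>(i, T)\<in>splits. sum_subsets_through (\<lambda>_. 1) i T * sum_subsets_through (\<lambda>_. 1) i (other_half i T))
       = real (card splits) * real ((2 * l - 1) choose l) ^ 2"
    by simp_all
qed

lemma average_meeting_pairs_0:
  "(\<Sum>(a, b)\<in>meeting_pairs 0. f a * g b) / card (meeting_pairs 0)
    = (\<Sum>(i, T)\<in>splits. sum_subsets f T * sum_subsets g (other_half i T))
      / (real (card splits) * real ((2 * l - 1) choose l) ^ 2)"
proof -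
  define c where "c = real ((2 * l - 1) * ((2 * l - 2) choose (l - 1)))"
  have weight: "real (card splits) * real ((2 * l - 1) choose l) ^ 2 = c * card (meeting_pairs 0)"
    using sum_splits_products_disjoint[of "\<lambda>_. 1" "\<lambda>_. 1"] sum_splits_ones(1) by (simp add: c_def)
  then have "c \<noteq> 0" using card_splits_pos l_pos by auto
  then show ?thesis unfolding weight sum_splits_products_disjoint c_def[symmetric] by simp
qed

lemma average_meeting_pairs_1:
  "(\<Sum>(a, b)\<in>meeting_pairs 1. f a * g b) / card (meeting_pairs 1)
    = (\<Sum>(i, T)\<in>splits. sum_subsets_through f i T * sum_subsets_through g i (other_half i T))
      / (real (card splits) * real ((2 * l - 1) choose l) ^ 2)"
proof -
  define c where "c = real ((2 * l) choose l)"
  have weight: "real (card splits) * real ((2 * l - 1) choose l) ^ 2 = c * card (meeting_pairs 1)"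
    using sum_splits_products_meeting[of "\<lambda>_. 1" "\<lambda>_. 1"] sum_splits_ones(2) by (simp add: c_def)
  then have "c \<noteq> 0" using card_splits_pos l_pos by auto
  then show ?thesis unfolding weight sum_splits_products_meeting c_def[symmetric] by simp
qed

lemma sum_splits_products_through_ge:
  fixes f g :: "'a set \<Rightarrow> real"
  assumes "\<And>a. a \<subseteq> N \<Longrightarrow> 0 \<le> f a" and "\<And>b. b \<subseteq> N \<Longrightarrow> 0 \<le> g b"
    and "0 \<le> \<alpha>"
  shows "\<alpha>\<^sup>2 * (\<Sum>(i, T)\<in>splits. sum_subsets f T * sum_subsets g (other_half i T))
      - \<alpha> * ((\<Sum>(i, T)\<in>splits. max 0 (\<alpha> * sum_subsets f T - sum_subsets_through f i T)
               * sum_subsets g (other_half i T))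
            + (\<Sum>(i, T)\<in>splits. max 0 (\<alpha> * sum_subsets g (other_half i T)
                 - sum_subsets_through g i (other_half i T)) * sum_subsets f T))
    \<le> (\<Sum>(i, T)\<in>splits. sum_subsets_through f i T * sum_subsets_through g i (other_half i T))"
proof -
  have "\<alpha>\<^sup>2 * (sum_subsets f T * sum_subsets g (other_half i T))
      - \<alpha> * (max 0 (\<alpha> * sum_subsets f T - sum_subsets_through f i T) * sum_subsets g (other_half i T)
        + max 0 (\<alpha> * sum_subsets g (other_half i T) - sum_subsets_through g i (other_half i T))
          * sum_subsets f T)
    \<le> sum_subsets_through f i T * sum_subsets_through g i (other_half i T)"
    if "(i, T) \<in> splits" for i T
    using splits_subset[OF that] assms
    by (intro hinge_product_le sum_subsets_nonneg sum_subsets_through_nonneg) auto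
  then have "(\<Sum>(i, T)\<in>splits. \<alpha>\<^sup>2 * (sum_subsets f T * sum_subsets g (other_half i T))
      - \<alpha> * (max 0 (\<alpha> * sum_subsets f T - sum_subsets_through f i T) * sum_subsets g (other_half i T)
        + max 0 (\<alpha> * sum_subsets g (other_half i T) - sum_subsets_through g i (other_half i T))
          * sum_subsets f T))
    \<le> (\<Sum>(i, T)\<in>splits. sum_subsets_through f i T * sum_subsets_through g i (other_half i T))"
    by (intro sum_mono) auto
  then show ?thesis
    by (simp add: sum_subtractf sum.distrib sum_distrib_left distrib_left case_prod_unfold)
qed

lemma sum_splits_hinge_bound_other_half:
  fixes f g :: "'a set \<Rightarrow> real"
  assumes f_nonneg: "\<And>a. a \<subseteq> N \<Longrightarrow> 0 \<le> f a" and g_nonneg: "\<And>b. b \<subseteq> N \<Longrightarrow> 0 \<le> g b"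
    and bound: "\<And>a b. (a, b) \<in> meeting_pairs 0 \<Longrightarrow> f a * g b \<le> M" and "0 \<le> M"
    and "0 < \<epsilon>" "\<epsilon> < 1"
  shows "(\<Sum>(i, T)\<in>splits. max 0 ((1 - \<epsilon>/4) * sum_subsets g (other_half i T)
            - sum_subsets_through g i (other_half i T)) * sum_subsets f T)
    \<le> \<epsilon>/4 * (\<Sum>(i, T)\<in>splits. sum_subsets f T * sum_subsets g (other_half i T))
      + 2 * real l * (real (card splits) * real ((2 * l - 1) choose l) ^ 2) * M * exp (- \<epsilon>\<^sup>2 * real l / 16)"
proof -
  have swapped_bound: "g a * f b \<le> M" if "(a, b) \<in> meeting_pairs 0" for a b
    using bound[of b a] that by (auto simp: meeting_pairs_def Int_commute mult.commute)
  have "(\<Sum>(i, T)\<in>splits. max 0 ((1 - \<epsilon>/4) * sum_subsets g (other_half i T)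
            - sum_subsets_through g i (other_half i T)) * sum_subsets f T)
      = (\<Sum>(i, T)\<in>splits. max 0 ((1 - \<epsilon>/4) * sum_subsets g T - sum_subsets_through g i T)
          * sum_subsets f (other_half i T))"
    by (subst sum_splits_swap_halves) (auto intro!: sum.cong simp: other_half_other_half)
  also have "\<dots> \<le> \<epsilon>/4 * (\<Sum>(i, T)\<in>splits. sum_subsets g T * sum_subsets f (other_half i T))
      + 2 * real l * (real (card splits) * real ((2 * l - 1) choose l) ^ 2) * M * exp (- \<epsilon>\<^sup>2 * real l / 16)"
    by (rule sum_splits_hinge_bound[OF g_nonneg f_nonneg swapped_bound]) (use assms in auto)
  also have "(\<Sum>(i, T)\<in>splits. sum_subsets g T * sum_subsets f (other_half i T))
      = (\<Sum>(i, T)\<in>splits. sum_subsets f T * sum_subsets g (other_half i T))"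
    by (subst sum_splits_swap_halves) (auto intro!: sum.cong simp: other_half_other_half mult.commute)
  finally show ?thesis .
qed

lemma average_gap_bound:
  fixes f g :: "'a set \<Rightarrow> real"
  assumes f_nonneg: "\<And>a. a \<subseteq> N \<Longrightarrow> 0 \<le> f a" and g_nonneg: "\<And>b. b \<subseteq> N \<Longrightarrow> 0 \<le> g b"
    and "\<And>a b. (a, b) \<in> meeting_pairs 0 \<Longrightarrow> f a * g b \<le> M" and "0 \<le> M"
    and eps: "0 < \<epsilon>" "\<epsilon> < 1"
  shows "(1 - \<epsilon>) * ((\<Sum>(a, b)\<in>meeting_pairs 0. f a * g b) / card (meeting_pairs 0))
      - (\<Sum>(a, b)\<in>meeting_pairs 1. f a * g b) / card (meeting_pairs 1)
    \<le> 4 * real l * M * exp (- \<epsilon>\<^sup>2 * real l / 16)"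
proof -
  define W where "W = real (card splits) * real ((2 * l - 1) choose l) ^ 2"
  define S where "S = (\<Sum>(i, T)\<in>splits. sum_subsets f T * sum_subsets g (other_half i T))"
  define S' where "S' = (\<Sum>(i, T)\<in>splits. sum_subsets_through f i T * sum_subsets_through g i (other_half i T))"
  have W: "0 < W" using card_splits_pos l_pos by (simp add: W_def)
  have S_nonneg: "0 \<le> S"
    unfolding S_def
  proof (rule sum_nonneg, clarify)
    fix i T assume "(i, T) \<in> splits"
    from splits_subset[OF this] show "0 \<le> sum_subsets f T * sum_subsets g (other_half i T)"
      using f_nonneg g_nonneg by (intro mult_nonneg_nonneg sum_subsets_nonneg) auto
  qed
  have "(1 - \<epsilon>) * S - S' \<le> 2 * (2 * real l * W * M * exp (- \<epsilon>\<^sup>2 * real l / 16))"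
    unfolding S_def S'_def W_def
    by (rule gap_le_of_hinge_bounds[OF eps S_nonneg[unfolded S_def] _
          sum_splits_products_through_ge[OF f_nonneg g_nonneg]
          sum_splits_hinge_bound[OF assms] sum_splits_hinge_bound_other_half[OF assms]])
       (use eps \<open>0 \<le> M\<close> in auto)
  then have "((1 - \<epsilon>) * S - S') / W \<le> 4 * real l * M * exp (- \<epsilon>\<^sup>2 * real l / 16)"
    using W by (simp add: field_simps)
  then show ?thesis
    unfolding average_meeting_pairs_0 average_meeting_pairs_1
    by (simp add: S_def S'_def W_def diff_divide_distrib)
qed
end

lemma two_powr_eq_powr_mult_exp:
  fixes \<epsilon> C :: real
  assumes "0 < x"
  shows "2 powr (- (\<epsilon>\<^sup>2 / (16 * ln 2)) * x + C * log 2 x) = x powr C * exp (- \<epsilon>\<^sup>2 * x / 16)"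
proof -
  have "(- (\<epsilon>\<^sup>2 / (16 * ln 2)) * x + C * log 2 x) * ln 2 = C * ln x + (- \<epsilon>\<^sup>2 * x / 16)"
    by (simp add: log_def field_simps)
  then show ?thesis
    using assms by (simp add: powr_def exp_add[symmetric])
qed

lemma linear_bound_le_quartic_bound:
  fixes a b M \<epsilon> :: real
  assumes "0 < l" and "0 \<le> M" and "a \<le> M" and "0 \<le> b" and "0 < \<epsilon>" and "\<epsilon> < 1"
    and gap: "(1 - \<epsilon>) * a - b \<le> 4 * real l * M * exp (- \<epsilon>\<^sup>2 * real l / 16)"
  shows "(1 - \<epsilon>) * a - b \<le> M * (real l ^ 4 * exp (- \<epsilon>\<^sup>2 * real l / 16))"
proof (cases "l = 1")
  case True
  txt \<open>Here \<open>4 * l > l ^ 4\<close>, so the linear bound is useless and \<open>a \<le> M\<close> is used directly.\<close>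
  have "1 - \<epsilon> \<le> 1 - \<epsilon>\<^sup>2 / 16" using assms(5,6) by (simp add: power2_eq_square mult_le_cancel_left1)
  also have "\<dots> \<le> exp (- \<epsilon>\<^sup>2 / 16)" using exp_ge_add_one_self[of "- \<epsilon>\<^sup>2 / 16"] by simp
  finally have exp_bound: "1 - \<epsilon> \<le> exp (- \<epsilon>\<^sup>2 / 16)" .
  have "(1 - \<epsilon>) * a \<le> (1 - \<epsilon>) * M" using assms(3,6) by (intro mult_left_mono) auto
  also have "\<dots> \<le> exp (- \<epsilon>\<^sup>2 / 16) * M" using exp_bound assms(2) by (rule mult_right_mono)
  finally have "(1 - \<epsilon>) * a \<le> exp (- \<epsilon>\<^sup>2 / 16) * M" .
  then show ?thesis using True assms(4) by (simp add: mult.commute)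
next
  case False
  then have "2 \<le> l" using assms(1) by simp
  then have "(2::real) ^ 3 * real l \<le> real l ^ 3 * real l"
    by (intro mult_right_mono power_mono) auto
  also have "\<dots> = real l ^ 4" by (simp add: power_Suc2[symmetric])
  finally have "4 * real l \<le> real l ^ 4" by simp
  then have "4 * real l * M * exp (- \<epsilon>\<^sup>2 * real l / 16) \<le> real l ^ 4 * M * exp (- \<epsilon>\<^sup>2 * real l / 16)"
    using assms(2) by (intro mult_right_mono) auto
  then show ?thesis using gap by (simp add: algebra_simps)
qed

lemma expectation_gap_pairs_meet:
  fixes n :: nat and \<mu> :: "(nat set \<times> nat set) pmf" and f g :: "nat set \<Rightarrow> real" and \<epsilon> :: real
  defines "l \<equiv> (n + 1) div 4"
  defines "A \<equiv> pairs_meet n l 0" and "B \<equiv> pairs_meet n l 1" and "X \<equiv> \<lambda>(a, b). f a * g b"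
  assumes n: "n mod 4 = 3"
    and A: "set_pmf \<mu> \<inter> A \<noteq> {}" "cond_pmf \<mu> A = pmf_of_set A"
    and B: "set_pmf \<mu> \<inter> B \<noteq> {}" "cond_pmf \<mu> B = pmf_of_set B"
    and f_nonneg: "\<And>a. a \<subseteq> {1..n} \<Longrightarrow> 0 \<le> f a" and g_nonneg: "\<And>b. b \<subseteq> {1..n} \<Longrightarrow> 0 \<le> g b"
    and eps: "0 < \<epsilon>" "\<epsilon> < 1"
  shows "(1 - \<epsilon>) * measure_pmf.expectation (cond_pmf \<mu> A) X - measure_pmf.expectation (cond_pmf \<mu> B) X
    \<le> Max (X ` (A \<union> B)) * 2 powr (- (\<epsilon>\<^sup>2 / (16 * ln 2)) * real l + 4 * log 2 (real l))"
proof -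
  have l: "n = 4 * l - 1" "0 < l" using n unfolding l_def by presburger+
  interpret splitting "{1..n}" l by unfold_locales (use l in auto)
  have AB: "A = meeting_pairs 0" "B = meeting_pairs 1"
    unfolding A_def B_def pairs_meet_def meeting_pairs_def by simp_all
  have ne: "A \<noteq> {}" "B \<noteq> {}" using A(1) B(1) by auto
  define M where "M = Max (X ` (A \<union> B))"
  have X_le_M: "X q \<le> M" if "q \<in> A \<union> B" for q
    using that finite_meeting_pairs by (simp add: M_def AB)
  have X_nonneg: "0 \<le> X q" if "q \<in> A \<union> B" for q
    using that f_nonneg g_nonneg unfolding A_def B_def pairs_meet_def X_def
    by (cases q) (auto intro: mult_nonneg_nonneg)
  have "M \<in> X ` (A \<union> B)" unfolding M_def using ne finite_meeting_pairs by (intro Max_in) (auto simp: AB)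
  then have "0 \<le> M" using X_nonneg by auto
  have EA: "measure_pmf.expectation (cond_pmf \<mu> A) X = sum X A / card A"
    and EB: "measure_pmf.expectation (cond_pmf \<mu> B) X = sum X B / card B"
    using A(2) B(2) ne finite_meeting_pairs by (simp_all add: integral_pmf_of_set AB)
  have gap: "(1 - \<epsilon>) * (sum X A / card A) - sum X B / card B \<le> 4 * real l * M * exp (- \<epsilon>\<^sup>2 * real l / 16)"
    unfolding AB X_def using X_le_M \<open>0 \<le> M\<close> f_nonneg g_nonneg eps
    by (intro average_gap_bound) (auto simp: AB X_def)
  have A_le: "sum X A / card A \<le> M"
  proof -
    have "sum X A \<le> card A * M" using X_le_M by (intro sum_bounded_above) auto
    then show ?thesis using ne finite_meeting_pairs by (simp add: AB divide_le_eq card_gt_0_iff mult.commute)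
  qed
  have B_ge: "0 \<le> sum X B / card B" using X_nonneg by (intro divide_nonneg_nonneg sum_nonneg) auto
  have "2 powr (- (\<epsilon>\<^sup>2 / (16 * ln 2)) * real l + 4 * log 2 (real l)) = real l ^ 4 * exp (- \<epsilon>\<^sup>2 * real l / 16)"
    using two_powr_eq_powr_mult_exp[where x = "real l" and \<epsilon> = \<epsilon> and C = 4] l(2) by (simp add: powr_realpow)
  then show ?thesis
    unfolding EA EB M_def[symmetric]
    using linear_bound_le_quartic_bound[OF l(2) \<open>0 \<le> M\<close> A_le B_ge eps gap] by simp
qed

theorem lemma4:
  shows "\<exists>C::real. \<forall>(n::nat) (\<mu>::(nat set \<times> nat set) pmf) (f::nat set \<Rightarrow> real)
           (g::nat set \<Rightarrow> real) (\<epsilon>::real).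
     (let l = (n + 1) div 4; A = pairs_meet n l 0; B = pairs_meet n l 1;
          X = (\<lambda>(a, b). f a * g b) in
     n mod 4 = 3 \<longrightarrow>
     set_pmf \<mu> \<subseteq> A \<union> B \<longrightarrow>
     set_pmf \<mu> \<inter> A \<noteq> {} \<longrightarrow> set_pmf \<mu> \<inter> B \<noteq> {} \<longrightarrow>
     cond_pmf \<mu> A = pmf_of_set A \<longrightarrow> cond_pmf \<mu> B = pmf_of_set B \<longrightarrow>
     (\<forall>a. a \<subseteq> {1..n} \<longrightarrow> f a \<ge> 0) \<longrightarrow> (\<forall>b. b \<subseteq> {1..n} \<longrightarrow> g b \<ge> 0) \<longrightarrow>
     0 < \<epsilon> \<longrightarrow> \<epsilon> < 1 \<longrightarrow>
     (1 - \<epsilon>) * measure_pmf.expectation (cond_pmf \<mu> A) X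
       - measure_pmf.expectation (cond_pmf \<mu> B) X
     \<le> Max (X ` (A \<union> B)) *
        2 powr (- (\<epsilon>\<^sup>2 / (16 * ln 2)) * real l + C * log 2 (real l)))"
  unfolding Let_def by (intro exI[of _ 4] allI impI expectation_gap_pairs_meet) auto

end
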